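(* Let $c\in[1,2)$, $h\in\mathcal{R}_c$, and let $\varphi$ be the compositional inverse of $h$. Let $(X,\mathcal{B},\mu)$ be a probability space and $(f_n)_{n\in\mathbb{N}}$ a sequence of $1$-bounded measurable functions on $X$ such that for some $f\in L^2_\mu(X)$, \[ \lim_{N\to\infty}\Big\|\frac1N\sum_{n=1}^N f_n-f\Big\|_{L^2_\mu(X)}=0. \] Then \[ \limsup_{N\to\infty}\Big\|\frac{1}{|\mathbb{N}_h\cap[N]|}\sum_{n\in\mathbb{N}_h\cap[N]}f_n-f\Big\|_{L^2_\mu(X)}\le\limsup_{N\to\infty}\Big\|\sum_{n\in[N]}\frac{\Phi(-\varphi(n+1))-\Phi(-\varphi(n))}{\lfloor\varphi(N)\rfloor}f_n\Big\|_{L^2_\mu(X)}, \] where $\Phi(x)=\{x\}-1/2$.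
   Context: Class $\mathcal{R}_c$ ($c$-regularly varying functions), for $c\in[1,2)$ and some $x_0\ge1$: the set of $h\in\mathcal{C}^3([x_0,\infty)\to[1,\infty))$ such that (i) $h'>0$ and $h''>0$; (ii) $h(x)=Cx^c\exp\big(\int_{x_0}^x\frac{\vartheta(t)}{t}dt\big)$ for a constant $C>0$ and some $\vartheta\in\mathcal{C}^3([x_0,\infty)\to\mathbb{R})$ with $\vartheta(x)\to0$, $x\vartheta'(x)\to0$, $x^2\vartheta''(x)\to0$, $x^3\vartheta'''(x)\to0$ as $x\to\infty$; (iii) if $c=1$, additionally $\vartheta$ is positive and decreasing, $\vartheta(x)^{-1}\lesssim_\varepsilon x^\varepsilon$ for every $\varepsilon>0$, $\lim_{x\to\infty}x/h(x)=0$, and $x\vartheta'(x)/\vartheta(x)\to0$, $x^2\vartheta''(x)/\vartheta(x)\to0$, $x^3\vartheta'''(x)/\vartheta(x)\to0$ as $x\to\infty$. $h$ is extended arbitrarily to $[1,x_0)$ and $\varphi$ arbitrarily to small arguments; these choices do not affect the statement. Notation: $[N]=\{1,\dots,N\}$, $\mathbb{N}_h=\{\lfloor h(n)\rfloor:n\in\mathbb{N}\}$, $\{x\}=x-\lfloor x\rfloor$. A function is $1$-bounded if it is measurable with absolute value $\le1$. *)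

theory Defs
  imports "HOL-Probability.Probability"
begin

definition C3_on :: "real set \<Rightarrow> (real \<Rightarrow> real) \<Rightarrow> (real \<Rightarrow> real) \<Rightarrow> (real \<Rightarrow> real)
    \<Rightarrow> (real \<Rightarrow> real) \<Rightarrow> bool" where
  "C3_on S f f1 f2 f3 \<longleftrightarrow>
     (\<forall>x\<in>S. (f has_real_derivative f1 x) (at x within S) \<and>
             (f1 has_real_derivative f2 x) (at x within S) \<and>
             (f2 has_real_derivative f3 x) (at x within S)) \<and> continuous_on S f3"

definition regvar :: "real \<Rightarrow> real \<Rightarrow> (real \<Rightarrow> real) \<Rightarrow> bool" where
  "regvar c x0 h \<longleftrightarrow> 1 \<le> c \<and> c < 2 \<and> 1 \<le> x0 \<and>
    (\<exists>h1 h2 h3 C \<theta> \<theta>1 \<theta>2 \<theta>3.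
       C3_on {x0..} h h1 h2 h3 \<and>
       (\<forall>x\<ge>x0. 1 \<le> h x \<and> h1 x > 0 \<and> h2 x > 0) \<and>
       C > 0 \<and> C3_on {x0..} \<theta> \<theta>1 \<theta>2 \<theta>3 \<and>
       (\<forall>x\<ge>x0. h x = C * x powr c * exp (integral {x0..x} (\<lambda>t. \<theta> t / t))) \<and>
       (\<theta> \<longlongrightarrow> 0) at_top \<and>
       ((\<lambda>x. x * \<theta>1 x) \<longlongrightarrow> 0) at_top \<and>
       ((\<lambda>x. x^2 * \<theta>2 x) \<longlongrightarrow> 0) at_top \<and>
       ((\<lambda>x. x^3 * \<theta>3 x) \<longlongrightarrow> 0) at_top \<and>
       (c = 1 \<longrightarrow>
          (\<forall>x\<ge>x0. \<theta> x > 0) \<and>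
          (\<forall>x y. x0 \<le> x \<longrightarrow> x \<le> y \<longrightarrow> \<theta> y \<le> \<theta> x) \<and>
          (\<forall>\<epsilon>>0. \<exists>K. \<forall>x\<ge>x0. 1 / \<theta> x \<le> K * x powr \<epsilon>) \<and>
          ((\<lambda>x. x / h x) \<longlongrightarrow> 0) at_top \<and>
          ((\<lambda>x. x * \<theta>1 x / \<theta> x) \<longlongrightarrow> 0) at_top \<and>
          ((\<lambda>x. x^2 * \<theta>2 x / \<theta> x) \<longlongrightarrow> 0) at_top \<and>
          ((\<lambda>x. x^3 * \<theta>3 x / \<theta> x) \<longlongrightarrow> 0) at_top))"

definition Nh :: "(real \<Rightarrow> real) \<Rightarrow> nat set" where
  "Nh h = {m. \<exists>n::nat. 1 \<le> n \<and> \<lfloor>h (real n)\<rfloor> = int m}"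

definition L2norm :: "'a measure \<Rightarrow> ('a \<Rightarrow> complex) \<Rightarrow> real" where
  "L2norm M g = sqrt (integral\<^sup>L M (\<lambda>x. (cmod (g x))^2))"

definition sawtooth :: "real \<Rightarrow> real" where
  "sawtooth x = frac x - 1/2"

end

theory Submission
  imports Defs
begin

text \<open>
  Since \<open>h\<close> is convex and superlinear, the gaps \<open>\<phi> (m + 1) - \<phi> m\<close> of its inverse decrease and
  are eventually at most \<open>1\<close>, so for large \<open>m\<close> the indicator of \<open>Nh h\<close> at \<open>m\<close> is
  \<open>\<lceil>\<phi> (m + 1)\<rceil> - \<lceil>\<phi> m\<rceil> = (\<phi> (m + 1) - \<phi> m) + (sawtooth (- \<phi> (m + 1)) - sawtooth (- \<phi> m))\<close>.
  The first part is a decreasing weight sequence: by summation by parts its weighted averages of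
  \<open>f n\<close> inherit the \<open>L\<^sup>2\<close>-convergence of the Cesaro averages. Its partial sums, the counting
  function of \<open>Nh h\<close> and \<open>\<lfloor>\<phi> N\<rfloor>\<close> all equal \<open>\<phi> N + O(1)\<close>, so after normalisation only the
  sawtooth part survives.
\<close>

section \<open>Square-integrable functions and the \<open>L\<^sup>2\<close> seminorm\<close>

definition square_integrable :: "'a measure \<Rightarrow> ('a \<Rightarrow> complex) \<Rightarrow> bool" where
  "square_integrable M u \<longleftrightarrow> u \<in> borel_measurable M \<and> integrable M (\<lambda>x. (cmod (u x))\<^sup>2)"

lemma square_integrable_add:
  assumes "square_integrable M u" "square_integrable M v"
  shows "square_integrable M (\<lambda>x. u x + v x)"
proof -
  have [measurable]: "u \<in> borel_measurable M" "v \<in> borel_measurable M"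
    using assms by (auto simp: square_integrable_def)
  have "integrable M (\<lambda>x. (cmod (u x + v x))\<^sup>2)"
  proof (rule Bochner_Integration.integrable_bound)
    show "integrable M (\<lambda>x. 2 * (cmod (u x))\<^sup>2 + 2 * (cmod (v x))\<^sup>2)"
      using assms by (simp add: square_integrable_def)
    have "(cmod (u x + v x))\<^sup>2 \<le> 2 * (cmod (u x))\<^sup>2 + 2 * (cmod (v x))\<^sup>2" for x
      by (smt (verit) norm_triangle_ineq norm_ge_zero power_mono sum_squares_bound power2_sum)
    then show "AE x in M. norm ((cmod (u x + v x))\<^sup>2) \<le> norm (2 * (cmod (u x))\<^sup>2 + 2 * (cmod (v x))\<^sup>2)"
      by simp
  qed measurable
  then show ?thesis by (simp add: square_integrable_def)
qed

lemma square_integrable_cmult: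
  assumes "square_integrable M u" shows "square_integrable M (\<lambda>x. c * u x)"
  using assms by (simp add: square_integrable_def norm_mult power_mult_distrib borel_measurable_times)

lemma square_integrable_diff:
  assumes "square_integrable M u" "square_integrable M v"
  shows "square_integrable M (\<lambda>x. u x - v x)"
  using square_integrable_add[OF assms(1) square_integrable_cmult[OF assms(2), of "-1"]] by simp

lemma square_integrable_sum:
  assumes "\<And>i. i \<in> I \<Longrightarrow> square_integrable M (u i)"
  shows "square_integrable M (\<lambda>x. \<Sum>i\<in>I. u i x)"
  using assms
proof (induction I rule: infinite_finite_induct)
  case (insert a F)
  then show ?case by (simp add: square_integrable_add)
qed (simp_all add: square_integrable_def)

lemma square_integrable_bounded:
  assumes "finite_measure M" "u \<in> borel_measurable M" "\<And>x. x \<in> space M \<Longrightarrow> cmod (u x) \<le> B"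
  shows "square_integrable M u"
proof -
  have "integrable M (\<lambda>x. (cmod (u x))\<^sup>2)"
  proof (rule finite_measure.integrable_const_bound[OF assms(1)])
    show "AE x in M. norm ((cmod (u x))\<^sup>2) \<le> B\<^sup>2"
      using assms(3) by (intro AE_I2) (auto intro!: power_mono)
  qed (use assms(2) in measurable)
  then show ?thesis using assms(2) by (simp add: square_integrable_def)
qed

lemma L2norm_nonneg: "L2norm M u \<ge> 0"
  unfolding L2norm_def by (auto intro!: integral_nonneg_AE)

lemma L2norm_cmult: "L2norm M (\<lambda>x. c * u x) = cmod c * L2norm M u"
  by (simp add: L2norm_def norm_mult power_mult_distrib real_sqrt_mult)

lemma L2norm_of_real_mult:
  "r \<ge> 0 \<Longrightarrow> L2norm M (\<lambda>x. complex_of_real r * u x) = r * L2norm M u"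
  by (simp add: L2norm_cmult)

lemma L2norm_le_bound:
  assumes "prob_space M" "u \<in> borel_measurable M" "\<And>x. x \<in> space M \<Longrightarrow> cmod (u x) \<le> B"
  shows "L2norm M u \<le> B"
proof -
  interpret prob_space M by fact
  have B: "B \<ge> 0"
    using assms(3) norm_ge_zero order_trans by (metis ex_in_conv not_empty)
  have "(\<integral>x. (cmod (u x))\<^sup>2 \<partial>M) \<le> (\<integral>x. B\<^sup>2 \<partial>M)"
    by (rule integral_mono') (use assms(3) in \<open>auto intro!: power_mono\<close>)
  then show ?thesis
    using B by (simp add: L2norm_def prob_space real_le_lsqrt)
qed

lemma sq_add_le_weighted:
  fixes a b t :: real
  assumes "t > 0"
  shows "(a + b)\<^sup>2 \<le> (1 + t) * a\<^sup>2 + (1 + 1/t) * b\<^sup>2"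
proof -
  have "0 \<le> (t * a - b)\<^sup>2 / t" using assms by simp
  also have "\<dots> = t * a\<^sup>2 - 2 * a * b + b\<^sup>2 / t"
    using assms by (simp add: field_simps power2_eq_square)
  finally show ?thesis by (simp add: power2_eq_square field_simps)
qed

lemma le_sqrt_add_sqrt_sq:
  fixes A B X :: real
  assumes "A \<ge> 0" "B \<ge> 0" and bound: "\<And>t. t > 0 \<Longrightarrow> X \<le> (1 + t) * A + (1 + 1/t) * B"
  shows "X \<le> (sqrt A + sqrt B)\<^sup>2"
proof (rule field_le_epsilon)
  fix e :: real assume e: "e > 0"
  define a b where "a = sqrt A" and "b = sqrt B"
  have ab: "a \<ge> 0" "b \<ge> 0" "A = a\<^sup>2" "B = b\<^sup>2"
    using assms by (auto simp: a_def b_def)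
  define \<epsilon> where "\<epsilon> = e / (2 * (a + b) + 1)"
  have \<epsilon>: "\<epsilon> > 0" "2 * \<epsilon> * (a + b) \<le> e"
    using e ab by (auto simp: \<epsilon>_def field_simps)
  \<comment> \<open>the optimal weight would be \<open>b / a\<close>; the shift by \<open>\<epsilon>\<close> avoids dividing by zero\<close>
  define t where "t = (b + \<epsilon>) / (a + \<epsilon>)"
  have "(1 + t) * A = a\<^sup>2 / (a + \<epsilon>) * (a + b + 2 * \<epsilon>)"
    using ab \<epsilon> by (simp add: t_def field_simps)
  also have "\<dots> \<le> a * (a + b + 2 * \<epsilon>)"
    using ab \<epsilon> by (intro mult_right_mono) (auto simp: field_simps power2_eq_square)
  finally have A: "(1 + t) * A \<le> a * (a + b + 2 * \<epsilon>)" .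
  have "(1 + 1/t) * B = b\<^sup>2 / (b + \<epsilon>) * (a + b + 2 * \<epsilon>)"
    using ab \<epsilon> by (simp add: t_def field_simps)
  also have "\<dots> \<le> b * (a + b + 2 * \<epsilon>)"
    using ab \<epsilon> by (intro mult_right_mono) (auto simp: field_simps power2_eq_square)
  finally have B: "(1 + 1/t) * B \<le> b * (a + b + 2 * \<epsilon>)" .
  have "X \<le> (a + b) * (a + b + 2 * \<epsilon>)"
    using bound[of t] A B ab \<epsilon> by (simp add: t_def algebra_simps)
  also have "\<dots> \<le> (a + b)\<^sup>2 + e"
    using \<epsilon> by (simp add: power2_eq_square algebra_simps)
  finally show "X \<le> (sqrt A + sqrt B)\<^sup>2 + e" by (simp add: a_def b_def)
qed

lemma L2norm_triangle:
  assumes u: "square_integrable M u" and v: "square_integrable M v"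
  shows "L2norm M (\<lambda>x. u x + v x) \<le> L2norm M u + L2norm M v"
proof -
  let ?A = "\<integral>x. (cmod (u x))\<^sup>2 \<partial>M" and ?B = "\<integral>x. (cmod (v x))\<^sup>2 \<partial>M"
  have "(\<integral>x. (cmod (u x + v x))\<^sup>2 \<partial>M) \<le> (1 + t) * ?A + (1 + 1/t) * ?B" if t: "t > 0" for t
  proof -
    have "(\<integral>x. (cmod (u x + v x))\<^sup>2 \<partial>M)
        \<le> (\<integral>x. (1 + t) * (cmod (u x))\<^sup>2 + (1 + 1/t) * (cmod (v x))\<^sup>2 \<partial>M)"
    proof (rule integral_mono')
      show "integrable M (\<lambda>x. (1 + t) * (cmod (u x))\<^sup>2 + (1 + 1/t) * (cmod (v x))\<^sup>2)"
        using u v by (simp add: square_integrable_def)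
      show "(cmod (u x + v x))\<^sup>2 \<le> (1 + t) * (cmod (u x))\<^sup>2 + (1 + 1/t) * (cmod (v x))\<^sup>2" for x
        by (meson norm_triangle_ineq norm_ge_zero power_mono order_trans sq_add_le_weighted[OF t])
    qed (use t in auto)
    then show ?thesis using u v by (simp add: square_integrable_def)
  qed
  then have "(\<integral>x. (cmod (u x + v x))\<^sup>2 \<partial>M) \<le> (sqrt ?A + sqrt ?B)\<^sup>2"
    by (intro le_sqrt_add_sqrt_sq integral_nonneg_AE) auto
  then show ?thesis
    unfolding L2norm_def by (simp add: real_sqrt_le_iff real_le_lsqrt)
qed

lemma L2norm_sum_le:
  assumes "\<And>i. i \<in> I \<Longrightarrow> square_integrable M (u i)"
  shows "L2norm M (\<lambda>x. \<Sum>i\<in>I. u i x) \<le> (\<Sum>i\<in>I. L2norm M (u i))"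
  using assms
proof (induction I rule: infinite_finite_induct)
  case (insert a F)
  then have "L2norm M (\<lambda>x. u a x + (\<Sum>i\<in>F. u i x)) \<le> L2norm M (u a) + L2norm M (\<lambda>x. \<Sum>i\<in>F. u i x)"
    by (intro L2norm_triangle square_integrable_sum) auto
  with insert show ?case by simp
qed (simp_all add: L2norm_def)

section \<open>Averages with decreasing weights\<close>

lemma sum_by_parts:
  fixes a v :: "nat \<Rightarrow> 'b::comm_ring_1"
  shows "(\<Sum>n=1..N. v n * a n) =
    (\<Sum>n=1..N. (v n - v (Suc n)) * (\<Sum>k=1..n. a k)) + v (Suc N) * (\<Sum>k=1..N. a k)"
  by (induction N) (simp_all add: algebra_simps)

lemma abel_weighted_sum_le:
  fixes v E :: "nat \<Rightarrow> real"
  assumes vdec: "\<And>n. n \<ge> 1 \<Longrightarrow> v (Suc n) \<le> v n" and vnn: "\<And>n. 0 \<le> v n"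
    and Esmall: "\<And>n. n \<ge> K \<Longrightarrow> E n \<le> e" and "0 \<le> e" and "K \<le> N"
  shows "(\<Sum>n=1..N. (v n - v (Suc n)) * real n * E n) + v (Suc N) * real N * E N
       \<le> (\<Sum>n=1..K. (v n - v (Suc n)) * real n * E n) + e * (\<Sum>n=1..N. v n)"
proof -
  have "(\<Sum>n=1..N. (v n - v (Suc n)) * real n * E n)
      = (\<Sum>n=1..K. (v n - v (Suc n)) * real n * E n) + (\<Sum>n=Suc K..N. (v n - v (Suc n)) * real n * E n)"
    using sum.ub_add_nat[of 1 K _ "N - K"] \<open>K \<le> N\<close> by simp
  also have "(\<Sum>n=Suc K..N. (v n - v (Suc n)) * real n * E n) \<le> (\<Sum>n=Suc K..N. (v n - v (Suc n)) * real n * e)"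
    using vdec Esmall by (intro sum_mono mult_left_mono) auto
  also have "\<dots> \<le> (\<Sum>n=1..N. (v n - v (Suc n)) * real n * e)"
    using vdec \<open>0 \<le> e\<close> by (intro sum_mono2) (auto intro!: mult_nonneg_nonneg)
  finally have "(\<Sum>n=1..N. (v n - v (Suc n)) * real n * E n) + v (Suc N) * real N * E N
      \<le> (\<Sum>n=1..K. (v n - v (Suc n)) * real n * E n)
         + e * ((\<Sum>n=1..N. (v n - v (Suc n)) * real n) + v (Suc N) * real N)"
    using mult_left_mono[OF Esmall[OF \<open>K \<le> N\<close>], of "v (Suc N) * real N"] vnn
    by (simp add: sum_distrib_left algebra_simps)
  also have "(\<Sum>n=1..N. (v n - v (Suc n)) * real n) + v (Suc N) * real N = (\<Sum>n=1..N. v n)"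
    using sum_by_parts[of v "\<lambda>_. 1" N] by simp
  finally show ?thesis .
qed

text \<open>By summation by parts the weights add up to \<open>\<Sum>n=1..N. v n\<close>, so this is a weighted mean
  of \<open>E\<close> in which every fixed initial segment is eventually negligible.\<close>
lemma abel_weighted_mean_tendsto_0:
  fixes v E :: "nat \<Rightarrow> real"
  assumes vdec: "\<And>n. n \<ge> 1 \<Longrightarrow> v (Suc n) \<le> v n" and vnn: "\<And>n. 0 \<le> v n"
    and Vinf: "filterlim (\<lambda>N. \<Sum>n=1..N. v n) at_top sequentially"
    and E0: "E \<longlonglongrightarrow> 0" and Enn: "\<And>n. 0 \<le> E n"
  shows "(\<lambda>N. ((\<Sum>n=1..N. (v n - v (Suc n)) * real n * E n) + v (Suc N) * real N * E N)
            / (\<Sum>n=1..N. v n)) \<longlonglongrightarrow> 0"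
proof (rule LIMSEQ_I)
  fix r :: real assume r: "r > 0"
  define V where "V N = (\<Sum>n=1..N. v n)" for N
  define Q where "Q N = (\<Sum>n=1..N. (v n - v (Suc n)) * real n * E n) + v (Suc N) * real N * E N" for N
  obtain K where "\<forall>n\<ge>K. norm (E n - 0) < r / 3"
    using LIMSEQ_D[OF E0] r by (meson divide_pos_pos zero_less_numeral)
  then have K: "\<And>n. n \<ge> K \<Longrightarrow> E n \<le> r / 3" by fastforce
  define C where "C = (\<Sum>n=1..K. (v n - v (Suc n)) * real n * E n)"
  obtain N0 where N0: "\<And>N. N \<ge> N0 \<Longrightarrow> V N \<ge> max 1 (3 * C / r)"
    using filterlim_at_top[THEN iffD1, OF Vinf, rule_format, of "max 1 (3 * C / r)"]
    unfolding eventually_sequentially V_def by blast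
  show "\<exists>N1. \<forall>N\<ge>N1. norm (Q N / V N - 0) < r"
  proof (intro exI allI impI)
    fix N assume N: "N \<ge> max N0 K"
    have VN: "V N \<ge> 1" "3 * C \<le> r * V N"
      using N0[of N] N r by (auto simp: pos_divide_le_eq mult.commute)
    have "Q N \<le> C + r / 3 * V N"
      unfolding Q_def C_def V_def using N r by (intro abel_weighted_sum_le vdec vnn K) auto
    moreover have "Q N \<ge> 0"
      unfolding Q_def using vdec vnn Enn by (intro add_nonneg_nonneg sum_nonneg mult_nonneg_nonneg) auto
    moreover have "r * V N = 3 * (r / 3 * V N)" "r / 3 * V N > 0"
      using VN r by simp_all
    ultimately have "Q N < r * V N" "0 \<le> Q N" using VN by linarith+
    then show "norm (Q N / V N - 0) < r"
      using VN by (simp add: divide_less_eq)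
  qed
qed

lemma L2norm_weighted_average_le:
  fixes f :: "nat \<Rightarrow> 'a \<Rightarrow> complex" and v :: "nat \<Rightarrow> real"
  assumes f: "\<And>n. square_integrable M (f n)" and g: "square_integrable M g"
    and vdec: "\<And>n. n \<ge> 1 \<Longrightarrow> v (Suc n) \<le> v n" and vnn: "\<And>n. 0 \<le> v n"
    and VN: "(\<Sum>n=1..N. v n) > 0"
  defines "E n \<equiv> L2norm M (\<lambda>x. (\<Sum>k=1..n. f k x) / of_nat n - g x)"
  shows "L2norm M (\<lambda>x. (\<Sum>n=1..N. complex_of_real (v n) * f n x) / complex_of_real (\<Sum>n=1..N. v n) - g x)
    \<le> ((\<Sum>n=1..N. (v n - v (Suc n)) * real n * E n) + v (Suc N) * real N * E N) / (\<Sum>n=1..N. v n)"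
proof -
  define V where "V = (\<Sum>n=1..N. v n)"
  define T where "T n x = (\<Sum>k=1..n. f k x - g x)" for n x
  have T_sq: "square_integrable M (T n)" for n
    unfolding T_def using f g by (intro square_integrable_sum square_integrable_diff)
  have "T n = (\<lambda>x. of_nat n * ((\<Sum>k=1..n. f k x) / of_nat n - g x))" for n
    by (cases "n = 0") (simp_all add: T_def fun_eq_iff sum_subtractf right_diff_distrib)
  then have L2_T: "L2norm M (T n) = real n * E n" for n
    unfolding E_def by (simp add: L2norm_cmult)
  have by_parts: "(\<Sum>n=1..N. complex_of_real (v n) * f n x) / complex_of_real V - g x
     = complex_of_real (1 / V) * ((\<Sum>n=1..N. complex_of_real (v n - v (Suc n)) * T n x)
             + complex_of_real (v (Suc N)) * T N x)" for x
  proof -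
    have "(\<Sum>n=1..N. complex_of_real (v n - v (Suc n)) * T n x) + complex_of_real (v (Suc N)) * T N x
        = (\<Sum>n=1..N. complex_of_real (v n) * (f n x - g x))"
      unfolding T_def of_real_diff by (rule sum_by_parts[symmetric])
    also have "\<dots> = (\<Sum>n=1..N. complex_of_real (v n) * f n x) - complex_of_real V * g x"
      by (simp add: V_def algebra_simps sum_subtractf sum_distrib_left)
    finally have "complex_of_real V * g x + (\<Sum>n=1..N. complex_of_real (v n - v (Suc n)) * T n x)
        + complex_of_real (v (Suc N)) * T N x = (\<Sum>n=1..N. complex_of_real (v n) * f n x)"
      by (simp add: algebra_simps)
    moreover have "complex_of_real V \<noteq> 0" using VN by (simp add: V_def del: of_real_sum)
    ultimately show ?thesis by (simp add: field_simps)
  qed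
  have "L2norm M (\<lambda>x. (\<Sum>n=1..N. complex_of_real (v n) * f n x) / complex_of_real V - g x)
      = (1 / V) * L2norm M (\<lambda>x. (\<Sum>n=1..N. complex_of_real (v n - v (Suc n)) * T n x)
             + complex_of_real (v (Suc N)) * T N x)"
    unfolding by_parts L2norm_cmult norm_of_real using VN by (simp add: V_def)
  also have "\<dots> \<le> (1 / V) * ((\<Sum>n=1..N. L2norm M (\<lambda>x. complex_of_real (v n - v (Suc n)) * T n x))
          + L2norm M (\<lambda>x. complex_of_real (v (Suc N)) * T N x))"
    using VN T_sq
    by (intro mult_left_mono add_mono order_trans[OF L2norm_triangle] L2norm_sum_le
        square_integrable_sum square_integrable_cmult) (simp_all add: V_def)
  also have "(\<Sum>n=1..N. L2norm M (\<lambda>x. complex_of_real (v n - v (Suc n)) * T n x))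
      = (\<Sum>n=1..N. (v n - v (Suc n)) * real n * E n)"
    using vdec by (intro sum.cong refl) (simp add: L2norm_of_real_mult L2_T del: of_real_diff)
  also have "L2norm M (\<lambda>x. complex_of_real (v (Suc N)) * T N x) = v (Suc N) * real N * E N"
    using vnn by (simp add: L2norm_of_real_mult L2_T)
  finally show ?thesis by (simp add: V_def)
qed

lemma weighted_average_L2_tendsto:
  fixes f :: "nat \<Rightarrow> 'a \<Rightarrow> complex" and v :: "nat \<Rightarrow> real"
  assumes f: "\<And>n. square_integrable M (f n)" and g: "square_integrable M g"
    and conv: "(\<lambda>N. L2norm M (\<lambda>x. (\<Sum>n=1..N. f n x) / of_nat N - g x)) \<longlonglongrightarrow> 0"
    and vdec: "\<And>n. n \<ge> 1 \<Longrightarrow> v (Suc n) \<le> v n" and vnn: "\<And>n. 0 \<le> v n"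
    and Vinf: "filterlim (\<lambda>N. \<Sum>n=1..N. v n) at_top sequentially"
  shows "(\<lambda>N. L2norm M (\<lambda>x. (\<Sum>n=1..N. complex_of_real (v n) * f n x)
             / complex_of_real (\<Sum>n=1..N. v n) - g x)) \<longlonglongrightarrow> 0"
proof (rule tendsto_sandwich[OF _ _ tendsto_const abel_weighted_mean_tendsto_0[OF vdec vnn Vinf conv]])
  show "eventually (\<lambda>N. 0 \<le> L2norm M (\<lambda>x. (\<Sum>n=1..N. complex_of_real (v n) * f n x)
             / complex_of_real (\<Sum>n=1..N. v n) - g x)) sequentially"
    by (simp add: L2norm_nonneg)
  have "eventually (\<lambda>N. (\<Sum>n=1..N. v n) > 0) sequentially"
    using Vinf by (simp add: filterlim_at_top_dense)
  then show "eventually (\<lambda>N. L2norm M (\<lambda>x. (\<Sum>n=1..N. complex_of_real (v n) * f n x)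
             / complex_of_real (\<Sum>n=1..N. v n) - g x)
      \<le> ((\<Sum>n=1..N. (v n - v (Suc n)) * real n * L2norm M (\<lambda>x. (\<Sum>k=1..n. f k x) / of_nat n - g x))
          + v (Suc N) * real N * L2norm M (\<lambda>x. (\<Sum>k=1..N. f k x) / of_nat N - g x))
         / (\<Sum>n=1..N. v n)) sequentially"
    by eventually_elim (intro L2norm_weighted_average_le f g vdec vnn)
qed (use L2norm_nonneg in auto)

section \<open>Averages along a set of integers\<close>

lemma limsup_le_of_eventually_le_mult_add:
  fixes L R a e :: "nat \<Rightarrow> real"
  assumes a: "a \<longlonglongrightarrow> 1" and e: "e \<longlonglongrightarrow> 0"
    and ev: "eventually (\<lambda>N. L N \<le> a N * R N + e N) sequentially"
  shows "limsup (\<lambda>N. ereal (L N)) \<le> limsup (\<lambda>N. ereal (R N))"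
proof -
  have "limsup (\<lambda>N. ereal (L N)) \<le> limsup (\<lambda>N. ereal (e N) + ereal (a N) * ereal (R N))"
    using ev by (intro Limsup_mono) (auto elim!: eventually_mono simp: add.commute)
  also have "\<dots> = 0 + limsup (\<lambda>N. ereal (a N) * ereal (R N))"
    using tendsto_ereal[OF e] by (intro ereal_limsup_lim_add) (simp_all add: zero_ereal_def)
  also have "limsup (\<lambda>N. ereal (a N) * ereal (R N)) = 1 * limsup (\<lambda>N. ereal (R N))"
    using tendsto_ereal[OF a] by (intro ereal_limsup_lim_mult) (simp_all add: one_ereal_def)
  finally show ?thesis by simp
qed

lemma tendsto_ratio_1_of_bounded_diff:
  fixes X Y :: "nat \<Rightarrow> real"
  assumes X: "filterlim X at_top sequentially"
    and bdd: "eventually (\<lambda>N. \<bar>Y N - X N\<bar> \<le> C) sequentially"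
  shows "(\<lambda>N. Y N / X N) \<longlonglongrightarrow> 1"
proof -
  have X_pos: "eventually (\<lambda>N. X N > 0) sequentially"
    using X by (simp add: filterlim_at_top_dense)
  have "(\<lambda>N. C / X N) \<longlonglongrightarrow> 0"
    by (rule tendsto_divide_0[OF tendsto_const filterlim_at_top_imp_at_infinity[OF X]])
  moreover have "eventually (\<lambda>N. norm ((Y N - X N) / X N) \<le> norm (C / X N) * 1) sequentially"
    using bdd X_pos
  proof eventually_elim
    case (elim N)
    then show ?case by (simp add: abs_divide divide_right_mono)
  qed
  ultimately have "(\<lambda>N. (Y N - X N) / X N) \<longlonglongrightarrow> 0"
    by (rule tendsto_0_le)
  then have "(\<lambda>N. 1 + (Y N - X N) / X N) \<longlonglongrightarrow> 1 + 0"
    by (intro tendsto_add tendsto_const)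
  moreover have "eventually (\<lambda>N. 1 + (Y N - X N) / X N = Y N / X N) sequentially"
    using X_pos by eventually_elim (simp add: field_simps)
  ultimately show ?thesis by (simp add: Lim_transform_eventually)
qed

lemma tendsto_ratio_1_of_bounded_diffs:
  fixes X Y Z :: "nat \<Rightarrow> real"
  assumes X: "filterlim X at_top sequentially"
    and Y: "eventually (\<lambda>N. \<bar>Y N - X N\<bar> \<le> C1) sequentially"
    and Z: "eventually (\<lambda>N. \<bar>Z N - X N\<bar> \<le> C2) sequentially"
  shows "(\<lambda>N. Z N / Y N) \<longlonglongrightarrow> 1"
proof -
  have "(\<lambda>N. (Z N / X N) / (Y N / X N)) \<longlonglongrightarrow> 1 / 1"
    by (intro tendsto_divide tendsto_ratio_1_of_bounded_diff[OF X Z] tendsto_ratio_1_of_bounded_diff[OF X Y]) simp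
  moreover have "eventually (\<lambda>N. X N > 0) sequentially"
    using X by (simp add: filterlim_at_top_dense)
  then have "eventually (\<lambda>N. (Z N / X N) / (Y N / X N) = Z N / Y N) sequentially"
    by eventually_elim simp
  ultimately show ?thesis by (simp add: Lim_transform_eventually)
qed

lemma L2norm_subset_average_le:
  fixes f :: "nat \<Rightarrow> 'a \<Rightarrow> complex" and A :: "nat set" and v s :: "nat \<Rightarrow> real" and D :: real
  assumes f: "\<And>n. square_integrable M (f n)" and f1: "\<And>n. L2norm M (f n) \<le> 1"
    and g: "square_integrable M g"
    and K_pos: "card (A \<inter> {1..N}) > 0" and V_pos: "(\<Sum>n=1..N. v n) > 0" and D_pos: "D > 0"
  defines "K \<equiv> real (card (A \<inter> {1..N}))" and "V \<equiv> \<Sum>n=1..N. v n"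
  shows "L2norm M (\<lambda>x. (\<Sum>n\<in>A \<inter> {1..N}. f n x) / of_nat (card (A \<inter> {1..N})) - g x)
    \<le> D / K * L2norm M (\<lambda>x. \<Sum>n=1..N. complex_of_real (s n / D) * f n x)
      + V / K * L2norm M (\<lambda>x. (\<Sum>n=1..N. complex_of_real (v n) * f n x) / complex_of_real V - g x)
      + \<bar>V / K - 1\<bar> * L2norm M g + (\<Sum>n=1..N. \<bar>indicator A n - v n - s n\<bar>) / K"
proof -
  define S where "S x = (\<Sum>n=1..N. complex_of_real (s n / D) * f n x)" for x
  define W where "W x = (\<Sum>n=1..N. complex_of_real (v n) * f n x) / complex_of_real V - g x" for x
  define R where "R x = (\<Sum>n=1..N. complex_of_real (indicator A n - v n - s n) * f n x)" for x
  have sq: "square_integrable M S" "square_integrable M W" "square_integrable M R"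
    unfolding S_def W_def R_def using f g
    by (auto intro!: square_integrable_sum square_integrable_cmult square_integrable_diff
        simp: divide_inverse mult.commute[of _ "inverse _"])
  have KVD: "K > 0" "V > 0" "complex_of_real K \<noteq> 0" "complex_of_real V \<noteq> 0" "complex_of_real D \<noteq> 0"
    using K_pos V_pos D_pos by (simp_all add: K_def V_def card_gt_0_iff del: of_real_sum)
  have split: "(\<Sum>n\<in>A \<inter> {1..N}. f n x) / of_nat (card (A \<inter> {1..N})) - g x
      = complex_of_real (D / K) * S x + complex_of_real (V / K) * W x
        + complex_of_real (V / K - 1) * g x + complex_of_real (1 / K) * R x" for x
  proof -
    have "(\<Sum>n\<in>A \<inter> {1..N}. f n x) = (\<Sum>n\<in>{1..N} \<inter> A. f n x)"
      by (simp only: Int_commute)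
    also have "\<dots> = (\<Sum>n=1..N. complex_of_real (indicator A n) * f n x)"
      by (subst sum.inter_restrict) (auto intro!: sum.cong simp: indicator_def)
    also have "\<dots> = (\<Sum>n=1..N. complex_of_real (v n) * f n x) + complex_of_real D * S x + R x"
      using KVD by (simp add: S_def R_def sum.distrib[symmetric] sum_distrib_left algebra_simps)
    finally show ?thesis
      using KVD by (simp add: W_def K_def field_simps)
  qed
  have "L2norm M (\<lambda>x. (\<Sum>n\<in>A \<inter> {1..N}. f n x) / of_nat (card (A \<inter> {1..N})) - g x)
    \<le> L2norm M (\<lambda>x. complex_of_real (D / K) * S x) + L2norm M (\<lambda>x. complex_of_real (V / K) * W x)
      + L2norm M (\<lambda>x. complex_of_real (V / K - 1) * g x) + L2norm M (\<lambda>x. complex_of_real (1 / K) * R x)"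
    unfolding split using sq g
    by (intro order_trans[OF L2norm_triangle] add_mono order_refl square_integrable_add
        square_integrable_cmult) auto
  also have "L2norm M R \<le> (\<Sum>n=1..N. \<bar>indicator A n - v n - s n\<bar>)"
  proof -
    have "L2norm M R \<le> (\<Sum>n=1..N. \<bar>indicator A n - v n - s n\<bar> * L2norm M (f n))"
      unfolding R_def using f
      by (intro order_trans[OF L2norm_sum_le] square_integrable_cmult) (simp_all add: L2norm_cmult del: of_real_diff)
    also have "\<dots> \<le> (\<Sum>n=1..N. \<bar>indicator A n - v n - s n\<bar>)"
      using f1 by (intro sum_mono) (simp add: mult_left_le)
    finally show ?thesis .
  qed
  then have "L2norm M (\<lambda>x. complex_of_real (1 / K) * R x) \<le> (\<Sum>n=1..N. \<bar>indicator A n - v n - s n\<bar>) / K"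
    using KVD by (simp only: L2norm_cmult norm_of_real) (simp add: divide_right_mono)
  finally show ?thesis
    using KVD D_pos by (simp only: L2norm_cmult norm_of_real S_def W_def) simp
qed

lemma filterlim_at_top_of_bounded_diff:
  fixes X Y :: "nat \<Rightarrow> real"
  assumes X: "filterlim X at_top sequentially"
    and bdd: "eventually (\<lambda>N. \<bar>Y N - X N\<bar> \<le> C) sequentially"
  shows "filterlim Y at_top sequentially"
proof (rule filterlim_at_top_mono)
  show "filterlim (\<lambda>N. - C + X N) at_top sequentially"
    by (rule filterlim_tendsto_add_at_top[OF tendsto_const X])
  show "eventually (\<lambda>N. - C + X N \<le> Y N) sequentially"
    using bdd by eventually_elim linarith
qed

lemma sum_abs_eventually_zero:
  fixes r :: "nat \<Rightarrow> real"
  assumes "\<And>n. n \<ge> m0 \<Longrightarrow> r n = 0" and "m0 \<le> N"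
  shows "(\<Sum>n=1..N. \<bar>r n\<bar>) = (\<Sum>n=1..m0. \<bar>r n\<bar>)"
  using assms by (intro sum.mono_neutral_right) auto

lemma real_card_inter_eq_sum_indicator:
  fixes A :: "nat set"
  shows "real (card (A \<inter> {1..N})) = (\<Sum>n=1..N. indicator A n)"
proof -
  have "card (A \<inter> {1..N}) = (\<Sum>n=1..N. indicator A n :: nat)"
    using sum_indicator_eq_card[of "{1..N}" A] by (simp add: Int_commute)
  then show ?thesis by (simp add: real_of_nat_indicator)
qed

lemma card_inter_atLeastAtMost_minus_sum_le:
  fixes A :: "nat set" and v s :: "nat \<Rightarrow> real"
  assumes s_bdd: "\<And>N. \<bar>\<Sum>n=1..N. s n\<bar> \<le> S"
    and decomp: "\<And>n. n \<ge> m0 \<Longrightarrow> indicator A n = v n + s n" and "m0 \<le> N"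
  shows "\<bar>real (card (A \<inter> {1..N})) - (\<Sum>n=1..N. v n)\<bar>
    \<le> S + (\<Sum>n=1..m0. \<bar>indicator A n - v n - s n\<bar>)"
proof -
  have "real (card (A \<inter> {1..N})) - (\<Sum>n=1..N. v n)
      = (\<Sum>n=1..N. s n) + (\<Sum>n=1..N. indicator A n - v n - s n)"
    unfolding real_card_inter_eq_sum_indicator by (simp add: sum_subtractf)
  moreover have "\<bar>\<Sum>n=1..N. indicator A n - v n - s n\<bar> \<le> (\<Sum>n=1..m0. \<bar>indicator A n - v n - s n\<bar>)"
    using decomp \<open>m0 \<le> N\<close> by (subst sum_abs_eventually_zero[symmetric]) (auto intro: sum_abs)
  ultimately show ?thesis using s_bdd[of N] by linarith
qed

theorem limsup_subset_average_le:
  fixes M :: "'a measure" and f :: "nat \<Rightarrow> 'a \<Rightarrow> complex" and g :: "'a \<Rightarrow> complex"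
    and A :: "nat set" and v s D :: "nat \<Rightarrow> real"
  assumes M: "prob_space M"
    and f_meas: "\<And>n. f n \<in> borel_measurable M" and f_bdd: "\<And>n x. x \<in> space M \<Longrightarrow> cmod (f n x) \<le> 1"
    and g: "square_integrable M g"
    and conv: "(\<lambda>N. L2norm M (\<lambda>x. (\<Sum>n=1..N. f n x) / of_nat N - g x)) \<longlonglongrightarrow> 0"
    and vdec: "\<And>n. n \<ge> 1 \<Longrightarrow> v (Suc n) \<le> v n" and vnn: "\<And>n. 0 \<le> v n"
    and Vinf: "filterlim (\<lambda>N. \<Sum>n=1..N. v n) at_top sequentially"
    and s_bdd: "\<And>N. \<bar>\<Sum>n=1..N. s n\<bar> \<le> S"
    and decomp: "\<And>n. n \<ge> m0 \<Longrightarrow> indicator A n = v n + s n"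
    and D: "eventually (\<lambda>N. \<bar>D N - (\<Sum>n=1..N. v n)\<bar> \<le> C) sequentially"
  shows "limsup (\<lambda>N. ereal (L2norm M (\<lambda>x. (\<Sum>n\<in>A \<inter> {1..N}. f n x) / of_nat (card (A \<inter> {1..N})) - g x)))
     \<le> limsup (\<lambda>N. ereal (L2norm M (\<lambda>x. \<Sum>n=1..N. complex_of_real (s n / D N) * f n x)))"
proof -
  define V where "V N = (\<Sum>n=1..N. v n)" for N
  define K where "K N = real (card (A \<inter> {1..N}))" for N
  define Eb where "Eb = (\<Sum>n=1..m0. \<bar>indicator A n - v n - s n :: real\<bar>)"
  define W where "W N = L2norm M (\<lambda>x. (\<Sum>n=1..N. complex_of_real (v n) * f n x) / complex_of_real (V N) - g x)"
    for N
  have "finite_measure M" using M by (simp add: prob_space_def)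
  then have f_sq: "square_integrable M (f n)" for n
    using f_meas f_bdd by (rule square_integrable_bounded)
  have KV: "eventually (\<lambda>N. \<bar>K N - V N\<bar> \<le> S + Eb) sequentially"
    using eventually_ge_at_top[of m0] unfolding K_def V_def Eb_def
    by eventually_elim (rule card_inter_atLeastAtMost_minus_sum_le[OF s_bdd decomp])
  have DV: "eventually (\<lambda>N. \<bar>D N - V N\<bar> \<le> C) sequentially" using D by (simp add: V_def)
  have Vinf': "filterlim V at_top sequentially" using Vinf by (simp add: V_def[abs_def])
  note Kinf = filterlim_at_top_of_bounded_diff[OF Vinf' KV]
  have pos: "eventually (\<lambda>N. V N > 0 \<and> K N > 0 \<and> D N > 0) sequentially"
    using Vinf' Kinf filterlim_at_top_of_bounded_diff[OF Vinf' DV]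
    by (simp add: filterlim_at_top_dense eventually_conj_iff)
  have "(\<lambda>N. V N / K N * W N + \<bar>V N / K N - 1\<bar> * L2norm M g + Eb / K N)
      \<longlonglongrightarrow> 1 * 0 + \<bar>1 - 1\<bar> * L2norm M g + 0"
    using weighted_average_L2_tendsto[OF f_sq g conv vdec vnn Vinf]
    by (intro tendsto_intros tendsto_ratio_1_of_bounded_diffs[OF Vinf' KV, of V 0]
        tendsto_divide_0[OF tendsto_const] filterlim_at_top_imp_at_infinity[OF Kinf])
       (simp_all add: W_def V_def)
  moreover have "eventually (\<lambda>N. L2norm M (\<lambda>x. (\<Sum>n\<in>A \<inter> {1..N}. f n x) / of_nat (card (A \<inter> {1..N})) - g x)
      \<le> D N / K N * L2norm M (\<lambda>x. \<Sum>n=1..N. complex_of_real (s n / D N) * f n x)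
        + (V N / K N * W N + \<bar>V N / K N - 1\<bar> * L2norm M g + Eb / K N)) sequentially"
    using eventually_ge_at_top[of m0] pos
  proof eventually_elim
    case (elim N)
    have "(\<Sum>n=1..N. \<bar>indicator A n - v n - s n\<bar>) = Eb"
      unfolding Eb_def using decomp elim by (intro sum_abs_eventually_zero) auto
    moreover have "card (A \<inter> {1..N}) > 0" using elim by (simp add: K_def)
    ultimately show ?case
      using L2norm_subset_average_le[OF f_sq L2norm_le_bound[OF M f_meas f_bdd] g,
          where A=A and N=N and v=v and s=s and D="D N"] elim
      by (simp add: K_def V_def W_def add.assoc)
  qed
  ultimately show ?thesis
    by (intro limsup_le_of_eventually_le_mult_add[OF tendsto_ratio_1_of_bounded_diffs[OF Vinf' KV DV]])
       simp_all
qed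

section \<open>Regularly varying functions\<close>

lemma regvarE:
  assumes "regvar c x0 h"
  obtains h1 h2 h3 C \<theta> \<theta>1 \<theta>2 \<theta>3 where "1 \<le> c" "c < 2" "1 \<le> x0"
    "C3_on {x0..} h h1 h2 h3"
    "\<forall>x\<ge>x0. 1 \<le> h x \<and> h1 x > 0 \<and> h2 x > 0"
    "C > 0" "C3_on {x0..} \<theta> \<theta>1 \<theta>2 \<theta>3"
    "\<forall>x\<ge>x0. h x = C * x powr c * exp (integral {x0..x} (\<lambda>t. \<theta> t / t))"
    "(\<theta> \<longlongrightarrow> 0) at_top"
    "c = 1 \<Longrightarrow> ((\<lambda>x. x / h x) \<longlongrightarrow> 0) at_top"
  using assms unfolding regvar_def by (elim conjE exE) (rule that; (assumption | simp))

lemma mvt_atLeast: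
  fixes F F' :: "real \<Rightarrow> real"
  assumes "\<And>x. x \<ge> x0 \<Longrightarrow> (F has_real_derivative F' x) (at x within {x0..})"
    and "x0 \<le> a" "a < b"
  obtains \<xi> where "a < \<xi>" "\<xi> < b" "F b - F a = F' \<xi> * (b - a)"
proof -
  have "(F has_derivative (\<lambda>t. F' x * t)) (at x within {a..b})" if "a \<le> x" "x \<le> b" for x
  proof -
    have "(F has_real_derivative F' x) (at x within {x0..})" using assms that by simp
    then have "(F has_real_derivative F' x) (at x within {a..b})"
      by (rule DERIV_subset) (use assms in auto)
    then show ?thesis by (simp add: has_field_derivative_def)
  qed
  from mvt_simple[OF \<open>a < b\<close> this]
  obtain \<xi> where "\<xi> \<in> {a<..<b}" "F b - F a = F' \<xi> * (b - a)" by blast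
  then show ?thesis using that by auto
qed

lemma regvar_strict_mono:
  assumes "regvar c x0 h" "x0 \<le> a" "a < b"
  shows "h a < h b"
proof -
  obtain h1 h2 h3 where C: "C3_on {x0..} h h1 h2 h3" and pos: "\<forall>x\<ge>x0. 1 \<le> h x \<and> h1 x > 0 \<and> h2 x > 0"
    using assms(1) by (elim regvarE)
  have "\<And>x. x \<ge> x0 \<Longrightarrow> (h has_real_derivative h1 x) (at x within {x0..})"
    using C by (simp add: C3_on_def)
  then obtain \<xi> where "a < \<xi>" "h b - h a = h1 \<xi> * (b - a)"
    using mvt_atLeast[OF _ assms(2,3)] by blast
  moreover have "h1 \<xi> > 0" using pos \<open>a < \<xi>\<close> assms(2) by auto
  ultimately show ?thesis using assms(3) mult_pos_pos[of "h1 \<xi>" "b - a"] by linarith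
qed

lemma regvar_slope_le:
  assumes "regvar c x0 h" "x0 \<le> a" "a < b" "b < d"
  shows "(h b - h a) / (b - a) \<le> (h d - h b) / (d - b)"
proof -
  obtain h1 h2 h3 where C: "C3_on {x0..} h h1 h2 h3" and pos: "\<forall>x\<ge>x0. 1 \<le> h x \<and> h1 x > 0 \<and> h2 x > 0"
    using assms(1) by (elim regvarE)
  have dh: "\<And>x. x \<ge> x0 \<Longrightarrow> (h has_real_derivative h1 x) (at x within {x0..})"
    and dh1: "\<And>x. x \<ge> x0 \<Longrightarrow> (h1 has_real_derivative h2 x) (at x within {x0..})"
    using C by (simp_all add: C3_on_def)
  obtain \<xi>1 where \<xi>1: "a < \<xi>1" "\<xi>1 < b" "h b - h a = h1 \<xi>1 * (b - a)"
    using mvt_atLeast[OF dh assms(2,3)] by blast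
  have "x0 \<le> b" using assms by linarith
  then obtain \<xi>2 where \<xi>2: "b < \<xi>2" "h d - h b = h1 \<xi>2 * (d - b)"
    using mvt_atLeast[OF dh _ assms(4)] by blast
  have "x0 \<le> \<xi>1" "\<xi>1 < \<xi>2" using assms \<xi>1 \<xi>2 by linarith+
  then obtain \<eta> where "\<xi>1 < \<eta>" "h1 \<xi>2 - h1 \<xi>1 = h2 \<eta> * (\<xi>2 - \<xi>1)"
    using mvt_atLeast[OF dh1] by blast
  moreover have "h2 \<eta> > 0" using pos \<open>\<xi>1 < \<eta>\<close> \<open>x0 \<le> \<xi>1\<close> by auto
  ultimately have "h1 \<xi>1 \<le> h1 \<xi>2"
    using mult_pos_pos[of "h2 \<eta>" "\<xi>2 - \<xi>1"] \<open>\<xi>1 < \<xi>2\<close> by linarith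
  then show ?thesis using \<xi>1 \<xi>2 assms by simp
qed

lemma integral_divide_id_ge_log:
  fixes \<theta> :: "real \<Rightarrow> real"
  assumes cont: "continuous_on {T..x} \<theta>" and T: "0 < T" "T \<le> x"
    and lower: "\<And>t. t \<in> {T..x} \<Longrightarrow> - e \<le> \<theta> t"
  shows "integral {T..x} (\<lambda>t. \<theta> t / t) \<ge> - e * ln x - - e * ln T"
proof (rule has_integral_le)
  show "((\<lambda>t. - e / t) has_integral (- e * ln x - - e * ln T)) {T..x}"
  proof (rule fundamental_theorem_of_calculus[OF T(2)])
    fix t assume "t \<in> {T..x}"
    then have "((\<lambda>t. - e * ln t) has_real_derivative (- e * (1 / t))) (at t within {T..x})"
      using T by (auto intro!: derivative_eq_intros)
    then show "((\<lambda>t. - e * ln t) has_vector_derivative - e / t) (at t within {T..x})"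
      by (simp add: has_real_derivative_iff_has_vector_derivative)
  qed
  have "continuous_on {T..x} (\<lambda>t. \<theta> t / t)"
    using T by (intro continuous_on_divide cont continuous_on_id) auto
  then show "((\<lambda>t. \<theta> t / t) has_integral integral {T..x} (\<lambda>t. \<theta> t / t)) {T..x}"
    using integrable_continuous_interval has_integral_integral by blast
  fix t assume t: "t \<in> {T..x}"
  then show "- e / t \<le> \<theta> t / t"
    using divide_right_mono[OF lower[OF t], of t] T by simp
qed

text \<open>A slowly varying factor is eventually larger than every negative power.\<close>
lemma regvar_powr_lower_bound:
  assumes hR: "regvar c x0 h" and e: "e > 0"
  obtains K T where "K > 0" "T \<ge> x0" "\<And>x. x \<ge> T \<Longrightarrow> h x \<ge> K * x powr (c - e)"
proof -
  obtain h1 h2 h3 C \<theta> \<theta>1 \<theta>2 \<theta>3 where x0: "1 \<le> x0" and C: "C > 0"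
    and C3: "C3_on {x0..} \<theta> \<theta>1 \<theta>2 \<theta>3"
    and hform: "\<forall>x\<ge>x0. h x = C * x powr c * exp (integral {x0..x} (\<lambda>t. \<theta> t / t))"
    and \<theta>0: "(\<theta> \<longlongrightarrow> 0) at_top"
    using hR by (elim regvarE)
  define I where "I x = integral {x0..x} (\<lambda>t. \<theta> t / t)" for x
  have cont: "continuous_on {x0..} \<theta>"
    using C3 by (auto simp: C3_on_def continuous_on_eq_continuous_within intro: DERIV_continuous)
  obtain T0 where T0: "\<And>t. t \<ge> T0 \<Longrightarrow> \<bar>\<theta> t\<bar> < e"
    using tendstoD[OF \<theta>0 e] by (auto simp: eventually_at_top_linorder)
  define T where "T = max T0 x0"
  have T: "T \<ge> x0" "\<And>t. t \<ge> T \<Longrightarrow> - e \<le> \<theta> t"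
    using T0 by (fastforce simp: T_def abs_less_iff)+
  have "h x \<ge> (C * exp (I T) * T powr e) * x powr (c - e)" if x: "x \<ge> T" for x
  proof -
    have cont_Tx: "continuous_on {T..x} \<theta>"
      by (rule continuous_on_subset[OF cont]) (use T in auto)
    have "continuous_on {x0..x} (\<lambda>t. \<theta> t / t)"
      using x0 by (intro continuous_on_divide continuous_on_id continuous_on_subset[OF cont]) auto
    then have "I x = I T + integral {T..x} (\<lambda>t. \<theta> t / t)"
      unfolding I_def using x T(1)
      by (intro Henstock_Kurzweil_Integration.integral_combine[symmetric] integrable_continuous_interval) auto
    also have "\<dots> \<ge> I T - e * (ln x - ln T)"
      using integral_divide_id_ge_log[OF cont_Tx _ x, of e] T x0 by (simp add: algebra_simps)
    finally have "exp (I x) \<ge> exp (I T - e * (ln x - ln T))" by simp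
    also have "exp (I T - e * (ln x - ln T)) = exp (I T) * T powr e * x powr - e"
      using T x x0 by (simp add: powr_def exp_add[symmetric] algebra_simps)
    finally have "exp (I x) \<ge> exp (I T) * T powr e * x powr - e" .
    then have "C * x powr c * (exp (I T) * T powr e * x powr - e) \<le> C * x powr c * exp (I x)"
      using C by (intro mult_left_mono) auto
    also have "C * x powr c * exp (I x) = h x"
      using hform T x by (simp add: I_def)
    finally have "h x \<ge> C * x powr c * (exp (I T) * T powr e * x powr - e)" .
    also have "C * x powr c * (exp (I T) * T powr e * x powr - e) = (C * exp (I T) * T powr e) * x powr (c - e)"
      by (simp add: powr_diff powr_minus divide_inverse mult_ac)
    finally show ?thesis .
  qed
  then show ?thesis
    using C T x0 by (intro that[of "C * exp (I T) * T powr e" T]) auto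
qed

lemma regvar_superlinear:
  assumes hR: "regvar c x0 h"
  shows "filterlim (\<lambda>x. h x / x) at_top at_top"
proof (cases "c = 1")
  case True
  have x0: "1 \<le> x0" and h_ge_1: "\<And>x. x \<ge> x0 \<Longrightarrow> h x \<ge> 1"
    and lim: "((\<lambda>x. x / h x) \<longlongrightarrow> 0) at_top"
    using hR True by (elim regvarE; simp)+
  have "eventually (\<lambda>x. 0 < x / h x) at_top"
    using eventually_ge_at_top[of x0]
  proof eventually_elim
    case (elim x)
    then show ?case using h_ge_1[of x] x0 by simp
  qed
  from filterlim_inverse_at_top[OF lim this] show ?thesis by simp
next
  case False
  have c: "c > 1" using hR False by (elim regvarE) auto
  define e where "e = (c - 1) / 2"
  have e: "e > 0" "c - e = e + 1" using c by (simp_all add: e_def field_simps)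
  obtain K T where K: "K > 0" and lower: "\<And>x. x \<ge> T \<Longrightarrow> h x \<ge> K * x powr (c - e)"
    using regvar_powr_lower_bound[OF hR e(1)] by blast
  have "((\<lambda>x. x powr - e) \<longlongrightarrow> 0) at_top"
    using e by (intro tendsto_neg_powr filterlim_ident) auto
  moreover have "eventually (\<lambda>x. 0 < x powr - e) at_top"
    using eventually_gt_at_top[of 0] by eventually_elim simp
  ultimately have "filterlim (\<lambda>x. inverse (x powr - e)) at_top at_top"
    by (rule filterlim_inverse_at_top)
  then have "filterlim (\<lambda>x. K * x powr e) at_top at_top"
    using K by (intro filterlim_tendsto_pos_mult_at_top[OF tendsto_const]) (simp_all add: powr_minus)
  moreover have "eventually (\<lambda>x. K * x powr e \<le> h x / x) at_top"
    using eventually_ge_at_top[of T] eventually_gt_at_top[of 0]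
  proof eventually_elim
    case (elim x)
    have "K * x powr e * x = K * x powr (c - e)"
      using elim by (simp add: e(2) powr_add)
    then have "K * x powr e * x \<le> h x" using lower[of x] elim by metis
    with elim show ?case by (simp add: pos_le_divide_eq)
  qed
  ultimately show ?thesis by (rule filterlim_at_top_mono)
qed

section \<open>The inverse of a regularly varying function\<close>

lemma sum_sawtooth_diff_bounded:
  fixes F :: "real \<Rightarrow> real"
  shows "\<bar>\<Sum>n=1..N. sawtooth (F (real n + 1)) - sawtooth (F (real n))\<bar> \<le> 1"
proof -
  have saw: "\<bar>sawtooth y\<bar> \<le> 1/2" for y
    unfolding sawtooth_def using frac_lt_1[of y] frac_ge_0[of y] by linarith
  have "(\<Sum>n=1..N. sawtooth (F (real n + 1)) - sawtooth (F (real n)))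
      = (\<Sum>n=1..N. sawtooth (F (real (Suc n))) - sawtooth (F (real n)))"
    by (simp add: add.commute)
  also have "\<dots> = sawtooth (F (real (Suc N))) - sawtooth (F 1)"
    by (subst sum_Suc_diff) simp_all
  finally show ?thesis using saw[of "F (real (Suc N))"] saw[of "F 1"] by linarith
qed

lemma ceiling_eq_add_frac_uminus: "real_of_int \<lceil>y\<rceil> = y + frac (- y)"
  by (simp add: frac_def ceiling_def)

locale regvar_inverse =
  fixes c x0 :: real and h \<phi> :: "real \<Rightarrow> real"
  assumes regvar: "regvar c x0 h"
    and phi_inv: "\<forall>y\<ge>h x0. x0 \<le> \<phi> y \<and> h (\<phi> y) = y"
begin

lemma x0_ge_1: "1 \<le> x0"
  using regvar by (elim regvarE)

lemma phi_ge: "h x0 \<le> y \<Longrightarrow> x0 \<le> \<phi> y"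
  and h_phi: "h x0 \<le> y \<Longrightarrow> h (\<phi> y) = y"
  using phi_inv by auto

lemma h_le_iff: "x0 \<le> a \<Longrightarrow> x0 \<le> b \<Longrightarrow> h a \<le> h b \<longleftrightarrow> a \<le> b"
  using regvar_strict_mono[OF regvar, of a b] regvar_strict_mono[OF regvar, of b a]
  by (cases a b rule: linorder_cases) auto

lemma le_h_iff: "h x0 \<le> y \<Longrightarrow> x0 \<le> z \<Longrightarrow> y \<le> h z \<longleftrightarrow> \<phi> y \<le> z"
  using h_le_iff[of "\<phi> y" z] phi_ge h_phi by simp

lemma h_less_iff: "h x0 \<le> y \<Longrightarrow> x0 \<le> z \<Longrightarrow> h z < y \<longleftrightarrow> z < \<phi> y"
  using le_h_iff[of y z] by (auto simp: not_le)

lemma phi_strict_mono: "h x0 \<le> y \<Longrightarrow> y < y' \<Longrightarrow> \<phi> y < \<phi> y'"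
  using le_h_iff[of y' "\<phi> y"] phi_ge[of y] h_phi[of y] by (auto simp: not_le)

definition phi_gap :: "nat \<Rightarrow> real" where
  "phi_gap m = \<phi> (real m + 1) - \<phi> (real m)"

lemma phi_gap_pos: "h x0 \<le> real m \<Longrightarrow> phi_gap m > 0"
  unfolding phi_gap_def using phi_strict_mono[of "real m" "real m + 1"] by simp

text \<open>Convexity of \<open>h\<close> makes the gaps of its inverse decrease.\<close>
lemma phi_gap_Suc_le:
  assumes m: "h x0 \<le> real m"
  shows "phi_gap (Suc m) \<le> phi_gap m"
proof -
  define a b d where "a = \<phi> (real m)" and "b = \<phi> (real m + 1)" and "d = \<phi> (real m + 2)"
  have ab: "a < b" and bd: "b < d"
    unfolding a_def b_def d_def using phi_strict_mono m by simp_all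
  have "(h b - h a) / (b - a) \<le> (h d - h b) / (d - b)"
    using regvar_slope_le[OF regvar _ ab bd] phi_ge m by (simp add: a_def)
  moreover have "h a = real m" "h b = real m + 1" "h d = real m + 2"
    unfolding a_def b_def d_def using h_phi m by auto
  ultimately have "d - b \<le> b - a"
    using ab bd by (simp add: divide_le_cancel field_simps)
  moreover have "phi_gap (Suc m) = d - b" "phi_gap m = b - a"
    by (simp_all add: phi_gap_def a_def b_def d_def add_ac)
  ultimately show ?thesis by simp
qed

lemma phi_gap_antimono:
  assumes "h x0 \<le> real m" "m \<le> n"
  shows "phi_gap n \<le> phi_gap m"
  using assms(2)
proof (induction n rule: dec_induct)
  case (step k)
  have "h x0 \<le> real k" using assms(1) step.hyps(1) by (meson of_nat_le_iff order_trans)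
  then show ?case using phi_gap_Suc_le[of k] step.IH by linarith
qed simp

lemma phi_tendsto_at_top: "filterlim (\<lambda>n::nat. \<phi> (real n)) at_top sequentially"
  unfolding filterlim_at_top
proof
  fix Z :: real
  define Z' where "Z' = max Z x0"
  have "eventually (\<lambda>n::nat. real n \<ge> max (h x0) (h Z' + 1)) sequentially"
    by (rule eventually_sequentiallyI[of "nat \<lceil>max (h x0) (h Z' + 1)\<rceil>"]) linarith
  then show "eventually (\<lambda>n::nat. Z \<le> \<phi> (real n)) sequentially"
  proof eventually_elim
    case (elim n)
    have "x0 \<le> Z'" by (simp add: Z'_def)
    then have "\<not> \<phi> (real n) \<le> Z'" using le_h_iff[of "real n" Z'] elim by simp
    then show ?case by (simp add: Z'_def)
  qed
qed

text \<open>If the gaps stayed above 1, \<open>\<phi>\<close> would grow at least linearly, contradicting the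
  superlinear growth of \<open>h\<close>.\<close>
lemma phi_gap_eventually_le_1: "eventually (\<lambda>m. phi_gap m \<le> 1) sequentially"
proof (rule ccontr)
  assume not_le_1: "\<not> eventually (\<lambda>m. phi_gap m \<le> 1) sequentially"
  obtain M :: nat where M: "h x0 \<le> real M" by (meson real_arch_simple)
  have big: "phi_gap m > 1" if "m \<ge> M" for m
  proof (rule ccontr)
    assume "\<not> phi_gap m > 1"
    then have "eventually (\<lambda>n. phi_gap n \<le> 1) sequentially"
      using M that phi_gap_antimono[of m] unfolding eventually_sequentially
      by (meson not_less order_trans of_nat_le_iff)
    with not_le_1 show False by simp
  qed
  have grow: "\<phi> (real (M + k)) \<ge> \<phi> (real M) + real k" for k
  proof (induction k)
    case (Suc k)
    then show ?case using big[of "M + k"] by (simp add: phi_gap_def add_ac)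
  qed simp
  obtain X where X: "\<And>x. x \<ge> X \<Longrightarrow> h x / x \<ge> 2"
    using regvar_superlinear[OF regvar] by (auto simp: filterlim_at_top eventually_at_top_linorder)
  obtain k :: nat where k: "real k \<ge> max X (real M + 1)" by (meson real_arch_simple)
  define y where "y = \<phi> (real (M + k))"
  have "\<phi> (real M) \<ge> 1" using phi_ge[OF M] x0_ge_1 by simp
  then have y: "y \<ge> real k + 1" using grow[of k] by (simp add: y_def)
  then have "h y \<ge> 2 * y" using X[of y] k by (simp add: pos_le_divide_eq)
  moreover have "h y = real M + real k" using h_phi[of "real (M + k)"] M by (simp add: y_def)
  ultimately show False using y k by simp
qed

lemma Nh_eventually_iff:
  "eventually (\<lambda>m. m \<in> Nh h \<longleftrightarrow> \<lceil>\<phi> (real m)\<rceil> < \<lceil>\<phi> (real m + 1)\<rceil>) sequentially"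
proof -
  obtain B where B: "\<And>n. real n < x0 \<Longrightarrow> nat \<lfloor>h (real n)\<rfloor> \<le> B"
  proof -
    have "finite {n::nat. real n < x0}"
      by (rule finite_subset[of _ "{..nat \<lceil>x0\<rceil>}"]) (auto, linarith)
    then show ?thesis
      using that finite_nat_set_iff_bounded_le[of "(\<lambda>n. nat \<lfloor>h (real n)\<rfloor>) ` {n. real n < x0}"] by auto
  qed
  have "m \<in> Nh h \<longleftrightarrow> \<lceil>\<phi> (real m)\<rceil> < \<lceil>\<phi> (real m + 1)\<rceil>" if m: "m > B" "h x0 \<le> real m" for m
  proof
    assume "m \<in> Nh h"
    then obtain n :: nat where n: "\<lfloor>h (real n)\<rfloor> = int m" by (auto simp: Nh_def)
    have "x0 \<le> real n"
    proof (rule ccontr)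
      assume "\<not> x0 \<le> real n"
      then have "m \<le> B" using B[of n] n by simp
      with m show False by simp
    qed
    moreover have "real m \<le> h (real n)" "h (real n) < real m + 1" using n by linarith+
    ultimately have "\<phi> (real m) \<le> real n" "real n < \<phi> (real m + 1)"
      using le_h_iff[of "real m" "real n"] h_less_iff[of "real m + 1" "real n"] m by auto
    then have "\<lceil>\<phi> (real m)\<rceil> \<le> int n" "int n < \<lceil>\<phi> (real m + 1)\<rceil>"
      by (simp_all add: ceiling_le_iff less_ceiling_iff)
    then show "\<lceil>\<phi> (real m)\<rceil> < \<lceil>\<phi> (real m + 1)\<rceil>" by linarith
  next
    assume lt: "\<lceil>\<phi> (real m)\<rceil> < \<lceil>\<phi> (real m + 1)\<rceil>"
    define n where "n = nat \<lceil>\<phi> (real m)\<rceil>"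
    have "\<phi> (real m) \<ge> x0" using phi_ge m by simp
    then have n: "real n \<ge> \<phi> (real m)" "real n < \<phi> (real m + 1)" "1 \<le> n" "x0 \<le> real n"
      using lt x0_ge_1 unfolding n_def by (auto simp: ceiling_less_iff less_ceiling_iff) linarith+
    then have "real m \<le> h (real n)" "h (real n) < real m + 1"
      using le_h_iff[of "real m" "real n"] h_less_iff[of "real m + 1" "real n"] m by auto
    then have "\<lfloor>h (real n)\<rfloor> = int m" by linarith
    with n show "m \<in> Nh h" by (auto simp: Nh_def)
  qed
  moreover have "eventually (\<lambda>m. m > B \<and> h x0 \<le> real m) sequentially"
    by (intro eventually_conj eventually_gt_at_top) (rule eventually_sequentiallyI[of "nat \<lceil>h x0\<rceil>"], linarith)
  ultimately show ?thesis by (auto elim: eventually_mono)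
qed

lemma indicator_Nh_eventually_eq:
  "eventually (\<lambda>m. indicator (Nh h) m
     = phi_gap m + (sawtooth (- \<phi> (real m + 1)) - sawtooth (- \<phi> (real m)))) sequentially"
  using Nh_eventually_iff phi_gap_eventually_le_1 eventually_ge_at_top[of "nat \<lceil>h x0\<rceil>"]
proof eventually_elim
  case (elim m)
  define a b where "a = \<phi> (real m)" and "b = \<phi> (real m + 1)"
  have "h x0 \<le> real m" using elim by linarith
  then have "a < b" "b \<le> a + 1" using phi_gap_pos[of m] elim by (auto simp: phi_gap_def a_def b_def)
  then have "\<lceil>a\<rceil> \<le> \<lceil>b\<rceil>" "\<lceil>b\<rceil> \<le> \<lceil>a\<rceil> + 1" by (simp_all add: ceiling_mono) linarith
  moreover have "phi_gap m + (sawtooth (- b) - sawtooth (- a)) = real_of_int \<lceil>b\<rceil> - real_of_int \<lceil>a\<rceil>"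
    by (simp add: phi_gap_def a_def b_def sawtooth_def ceiling_eq_add_frac_uminus)
  ultimately show ?case
    using elim(1) by (auto simp: indicator_def a_def b_def)
qed


lemma phi_gap_max_Suc_le: "h x0 \<le> real m0 \<Longrightarrow> phi_gap (max (Suc n) m0) \<le> phi_gap (max n m0)"
  by (rule phi_gap_antimono) auto

lemma phi_gap_max_nonneg: "h x0 \<le> real m0 \<Longrightarrow> 0 \<le> phi_gap (max n m0)"
  using phi_gap_pos[of "max n m0"] by (simp add: less_imp_le)

lemma sum_phi_gap_max:
  assumes "1 \<le> m0" "m0 \<le> N"
  shows "(\<Sum>n=1..N. phi_gap (max n m0)) = \<phi> (real N + 1) + (real (m0 - 1) * phi_gap m0 - \<phi> (real m0))"
proof -
  have "{1..N} = {1..<m0} \<union> {m0..N}" using assms by auto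
  then have "(\<Sum>n=1..N. phi_gap (max n m0)) = (\<Sum>n\<in>{1..<m0}. phi_gap (max n m0)) + (\<Sum>n=m0..N. phi_gap (max n m0))"
    by (simp only:) (rule sum.union_disjoint, auto)
  also have "(\<Sum>n\<in>{1..<m0}. phi_gap (max n m0)) = real (m0 - 1) * phi_gap m0"
    by simp
  also have "(\<Sum>n=m0..N. phi_gap (max n m0)) = (\<Sum>n=m0..N. \<phi> (real (Suc n)) - \<phi> (real n))"
    by (intro sum.cong) (auto simp: phi_gap_def add.commute)
  also have "\<dots> = \<phi> (real N + 1) - \<phi> (real m0)"
    using assms(2) by (subst sum_Suc_diff) (simp_all add: add.commute)
  finally show ?thesis by simp
qed

lemma sum_phi_gap_max_tendsto:
  assumes "1 \<le> m0"
  shows "filterlim (\<lambda>N. \<Sum>n=1..N. phi_gap (max n m0)) at_top sequentially"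
proof -
  have "filterlim (\<lambda>N. \<phi> (real (Suc N))) at_top sequentially"
    using phi_tendsto_at_top by (subst filterlim_sequentially_Suc)
  then have "filterlim (\<lambda>N. (real (m0 - 1) * phi_gap m0 - \<phi> (real m0)) + \<phi> (real N + 1)) at_top sequentially"
    by (intro filterlim_tendsto_add_at_top[OF tendsto_const]) (simp add: add.commute)
  moreover have "eventually (\<lambda>N. (real (m0 - 1) * phi_gap m0 - \<phi> (real m0)) + \<phi> (real N + 1)
      = (\<Sum>n=1..N. phi_gap (max n m0))) sequentially"
    using eventually_ge_at_top[of m0]
  proof eventually_elim
    case (elim N)
    show ?case using sum_phi_gap_max[OF assms elim] by simp
  qed
  ultimately show ?thesis by (rule filterlim_mono_eventually[OF _ order_refl order_refl])
qed

lemma floor_phi_minus_sum_phi_gap_max_le: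
  assumes "1 \<le> m0" "h x0 \<le> real m0" "\<And>m. m \<ge> m0 \<Longrightarrow> phi_gap m \<le> 1" "m0 \<le> N"
  shows "\<bar>of_int \<lfloor>\<phi> (real N)\<rfloor> - (\<Sum>n=1..N. phi_gap (max n m0))\<bar>
    \<le> 2 + \<bar>real (m0 - 1) * phi_gap m0 - \<phi> (real m0)\<bar>"
proof -
  have "h x0 \<le> real N" using assms(2,4) by linarith
  then have "0 < \<phi> (real N + 1) - \<phi> (real N)" "\<phi> (real N + 1) - \<phi> (real N) \<le> 1"
    using phi_gap_pos assms(3,4) by (auto simp: phi_gap_def)
  moreover have "of_int \<lfloor>\<phi> (real N)\<rfloor> \<le> \<phi> (real N)" "\<phi> (real N) - 1 < of_int \<lfloor>\<phi> (real N)\<rfloor>"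
    by linarith+
  ultimately show ?thesis
    unfolding sum_phi_gap_max[OF assms(1,4)] by linarith
qed

end

theorem proposition2p1:
  fixes c x0 :: real and h \<phi> :: "real \<Rightarrow> real"
    and M :: "'a measure" and f :: "nat \<Rightarrow> 'a \<Rightarrow> complex" and g :: "'a \<Rightarrow> complex"
  assumes hR: "regvar c x0 h"
    and phi_inv: "\<forall>y\<ge>h x0. x0 \<le> \<phi> y \<and> h (\<phi> y) = y"
    and M: "prob_space M"
    and f_meas: "\<forall>n. f n \<in> borel_measurable M"
    and f_bdd: "\<forall>n. \<forall>x\<in>space M. cmod (f n x) \<le> 1"
    and g_meas: "g \<in> borel_measurable M"
    and g_L2: "integrable M (\<lambda>x. (cmod (g x))^2)"
    and conv: "(\<lambda>N. L2norm M (\<lambda>x. (\<Sum>n=1..N. f n x) / of_nat N - g x)) \<longlonglongrightarrow> 0"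
  shows "limsup (\<lambda>N. ereal (L2norm M (\<lambda>x.
             (\<Sum>n\<in>Nh h \<inter> {1..N}. f n x) / of_nat (card (Nh h \<inter> {1..N})) - g x)))
         \<le> limsup (\<lambda>N. ereal (L2norm M (\<lambda>x.
             \<Sum>n=1..N. complex_of_real
               ((sawtooth (- \<phi> (real n + 1)) - sawtooth (- \<phi> (real n)))
                  / of_int \<lfloor>\<phi> (real N)\<rfloor>) * f n x)))"
proof -
  interpret regvar_inverse c x0 h \<phi> using hR phi_inv by unfold_locales
  have "eventually (\<lambda>m. 1 \<le> m \<and> h x0 \<le> real m \<and> phi_gap m \<le> 1 \<and> indicator (Nh h) m
      = phi_gap m + (sawtooth (- \<phi> (real m + 1)) - sawtooth (- \<phi> (real m)))) sequentially"
    using phi_gap_eventually_le_1 indicator_Nh_eventually_eq eventually_ge_at_top[of 1]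
      eventually_ge_at_top[of "nat \<lceil>h x0\<rceil>"]
    by eventually_elim linarith
  then obtain m0 where m0: "\<And>m. m \<ge> m0 \<Longrightarrow> 1 \<le> m \<and> h x0 \<le> real m \<and> phi_gap m \<le> 1 \<and> indicator (Nh h) m
      = phi_gap m + (sawtooth (- \<phi> (real m + 1)) - sawtooth (- \<phi> (real m)))"
    by (auto simp: eventually_sequentially)
  show ?thesis
  proof (rule limsup_subset_average_le[where v="\<lambda>n. phi_gap (max n m0)" and S=1 and ?m0.0=m0])
    show "filterlim (\<lambda>N. \<Sum>n=1..N. phi_gap (max n m0)) at_top sequentially"
      using m0[of m0] by (intro sum_phi_gap_max_tendsto) simp
    show "eventually (\<lambda>N. \<bar>of_int \<lfloor>\<phi> (real N)\<rfloor> - (\<Sum>n=1..N. phi_gap (max n m0))\<bar>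
        \<le> 2 + \<bar>real (m0 - 1) * phi_gap m0 - \<phi> (real m0)\<bar>) sequentially"
      using eventually_ge_at_top[of m0] by eventually_elim (intro floor_phi_minus_sum_phi_gap_max_le; use m0 in auto)
  qed (use M f_meas f_bdd g_meas g_L2 conv m0 sum_sawtooth_diff_bounded[of "\<lambda>x. - \<phi> x"]
      in \<open>auto simp: square_integrable_def intro: phi_gap_max_Suc_le phi_gap_max_nonneg\<close>)
qed

end
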